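(* For $p,q\ge 0$ let $K_{p,q}$ be the complete bipartite graph with parts of sizes $p$ and $q$ (every vertex of one part adjacent to every vertex of the other, no edges within parts). Then $$\sum_{p\ge0}\sum_{q\ge0}\mathrm{sa}(K_{p,q})\,\frac{x^p}{p!}\frac{y^q}{q!} = \frac{\cosh x+\cosh y-1}{\cosh(x+y)}.$$
   Context: All graphs are finite, simple and undirected. For a graph $G=(V,E)$ and $V'\subseteq V$, $G|_{V'}$ denotes the induced subgraph on $V'$. The signed a-number $\mathrm{sa}(G)$ is defined recursively: $\mathrm{sa}(G)=1$ if $G$ is the empty graph (no vertices); $\mathrm{sa}(G)=0$ if $G$ has a connected component with an odd number of vertices; otherwise $\mathrm{sa}(G)=-\sum_{V'\subsetneq V}\mathrm{sa}(G|_{V'})$. *)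

theory Defs
  imports "HOL-Analysis.Analysis"
begin

text \<open>A finite simple graph is given by a vertex set V and a symmetric irreflexive
  edge relation E. The induced subgraph on V' \<subseteq> V is (V', E): edges are only
  ever considered between vertices of the current vertex set.\<close>

definition adj_in :: "'a set \<Rightarrow> ('a \<Rightarrow> 'a \<Rightarrow> bool) \<Rightarrow> 'a \<Rightarrow> 'a \<Rightarrow> bool" where
  "adj_in V E u v \<longleftrightarrow> u \<in> V \<and> v \<in> V \<and> E u v"

definition component_of :: "'a set \<Rightarrow> ('a \<Rightarrow> 'a \<Rightarrow> bool) \<Rightarrow> 'a \<Rightarrow> 'a set" where
  "component_of V E v = {u. (adj_in V E)\<^sup>*\<^sup>* v u}"

definition components :: "'a set \<Rightarrow> ('a \<Rightarrow> 'a \<Rightarrow> bool) \<Rightarrow> 'a set set" where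
  "components V E = component_of V E ` V"

function sa :: "'a set \<Rightarrow> ('a \<Rightarrow> 'a \<Rightarrow> bool) \<Rightarrow> int" where
  "sa V E = (if V = {} then 1
             else if \<not> finite V then 0
             else if (\<exists>C \<in> components V E. odd (card C)) then 0
             else - (\<Sum>V' \<in> {V'. V' \<subset> V}. sa V' E))"
  by pat_completeness auto
termination
  by (relation "Wellfounded.measure (\<lambda>(V, E). card V)") (auto intro: psubset_card_mono)

definition Kpq_V :: "nat \<Rightarrow> nat \<Rightarrow> (nat + nat) set" where
  "Kpq_V p q = Inl ` {..<p} \<union> Inr ` {..<q}"

definition Kpq_E :: "(nat + nat) \<Rightarrow> (nat + nat) \<Rightarrow> bool" where
  "Kpq_E u v \<longleftrightarrow> isl u \<noteq> isl v"

end

theory Submission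
  imports Defs
begin

text \<open>The value f(p,q) = sa(K_{p,q}) depends only on p and q. Grouping the subsets of the vertex set
  by the sizes of their two parts turns the recursion for sa into a recursion for f: f(0,0) = 1,
  f(p,q) = 0 if exactly one of p, q is 0 (isolated vertices) or p + q is odd, and
  \<Sum>_{a\<le>p, b\<le>q} C(p,a) C(q,b) f(a,b) = 0 if p, q > 0 and p + q is even.
  For the exponential generating function F(x,y) of f this binomial convolution says, since f is
  supported on even p + q, that cosh(x+y) F(x,y) has coefficients [p + q even][p = 0 \<or> q = 0],
  i.e. cosh(x+y) F(x,y) = cosh x + cosh y - 1. The bound |f(p,q)| \<le> 4^(p+q) p! q! makes all series
  absolutely convergent for |x|, |y| < 1/4, which justifies the Cauchy product.\<close>

declare sa.simps[simp del]

lemma sa_empty: "sa {} E = 1"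
  by (subst sa.simps) simp

lemma sa_odd_component:
  "finite V \<Longrightarrow> C \<in> components V E \<Longrightarrow> odd (card C) \<Longrightarrow> sa V E = 0"
  by (subst sa.simps) (auto simp: components_def)

lemma sa_rec:
  "V \<noteq> {} \<Longrightarrow> finite V \<Longrightarrow> \<forall>C \<in> components V E. even (card C) \<Longrightarrow>
    sa V E = - (\<Sum>V' \<in> {V'. V' \<subset> V}. sa V' E)"
  by (subst sa.simps) auto

lemma component_of_isolated:
  assumes "\<And>u. \<not> adj_in V E v u"
  shows "component_of V E v = {v}"
  using assms unfolding component_of_def by (auto elim: converse_rtranclpE)

lemma sa_edgeless:
  assumes "finite V" "V \<noteq> {}" "\<And>u w. \<not> adj_in V E u w"
  shows "sa V E = 0"
proof -
  obtain v where "v \<in> V" using assms(2) by blast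
  then have "{v} \<in> components V E"
    unfolding components_def using component_of_isolated assms(3) by (metis image_eqI)
  then show ?thesis
    using assms(1) by (simp add: sa_odd_component)
qed

lemma component_of_subset: "component_of V E v \<subseteq> insert v V"
proof
  fix u assume "u \<in> component_of V E v"
  then have "(adj_in V E)\<^sup>*\<^sup>* v u" by (simp add: component_of_def)
  then show "u \<in> insert v V"
    by (induction rule: rtranclp_induct) (auto simp: adj_in_def)
qed

lemma components_complete_bipartite:
  assumes "A \<noteq> {}" "B \<noteq> {}"
  shows "components (Inl ` A \<union> Inr ` B) Kpq_E = {Inl ` A \<union> Inr ` B}"
proof -
  let ?V = "Inl ` A \<union> Inr ` B"
  obtain a b where ab: "a \<in> A" "b \<in> B" using assms by blast
  have "component_of ?V Kpq_E v = ?V" if v: "v \<in> ?V" for v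
  proof
    show "component_of ?V Kpq_E v \<subseteq> ?V" using component_of_subset[of ?V Kpq_E v] v by auto
    show "?V \<subseteq> component_of ?V Kpq_E v"
    proof
      fix u assume u: "u \<in> ?V"
      \<comment> \<open>u is adjacent to v, or both are adjacent to a vertex w of the other side\<close>
      define w where "w = (if isl v then Inr b else Inl a)"
      have "adj_in ?V Kpq_E v w" "isl u = isl v \<Longrightarrow> adj_in ?V Kpq_E w u"
        "isl u \<noteq> isl v \<Longrightarrow> adj_in ?V Kpq_E v u"
        using ab u v by (auto simp: w_def adj_in_def Kpq_E_def)
      then have "(adj_in ?V Kpq_E)\<^sup>*\<^sup>* v u"
        by (metis converse_rtranclp_into_rtranclp r_into_rtranclp)
      then show "u \<in> component_of ?V Kpq_E v" by (simp add: component_of_def)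
    qed
  qed
  then show ?thesis
    using ab unfolding components_def by auto
qed

lemma Inl_vimage_Un_Inr_vimage: "Inl ` (Inl -` V) \<union> Inr ` (Inr -` V) = V"
proof (rule set_eqI)
  show "x \<in> Inl ` (Inl -` V) \<union> Inr ` (Inr -` V) \<longleftrightarrow> x \<in> V" for x
    by (cases x) auto
qed

lemma bij_betw_Pow_Plus:
  "bij_betw (\<lambda>(A', B'). Inl ` A' \<union> Inr ` B') (Pow A \<times> Pow B) (Pow (Inl ` A \<union> Inr ` B))"
  by (rule bij_betwI[where g = "\<lambda>V. (Inl -` V, Inr -` V)"])
    (auto simp: vimage_image_eq Inl_vimage_Un_Inr_vimage)

lemma card_Inl_Un_Inr: "finite A \<Longrightarrow> finite B \<Longrightarrow> card (Inl ` A \<union> Inr ` B) = card A + card B"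
  by (subst card_Un_disjoint) (auto simp: card_image)

lemma card_add_card_less:
  assumes "finite A" "finite B" "A' \<subseteq> A" "B' \<subseteq> B" "(A', B') \<noteq> (A, B)"
  shows "card A' + card B' < card A + card B"
  using assms
  by (metis add_less_le_mono add_le_less_mono card_mono prod.inject psubset_card_mono psubsetI)

lemma sum_psubsets_Plus:
  "(\<Sum>V' \<in> {V'. V' \<subset> Inl ` A \<union> Inr ` B}. g V') =
    (\<Sum>(A', B') \<in> Pow A \<times> Pow B - {(A, B)}. g (Inl ` A' \<union> Inr ` B'))"
proof -
  have "{V'. V' \<subset> Inl ` A \<union> Inr ` B} = Pow (Inl ` A \<union> Inr ` B) - {Inl ` A \<union> Inr ` B}"
    by auto
  then have "bij_betw (\<lambda>(A', B'). Inl ` A' \<union> Inr ` B') (Pow A \<times> Pow B - {(A, B)})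
      {V'. V' \<subset> Inl ` A \<union> Inr ` B}"
    using bij_betw_DiffI[OF bij_betw_Pow_Plus[of A B], of "{(A, B)}"] by simp
  then show ?thesis
    by (simp add: sum.reindex_bij_betw[symmetric] case_prod_beta')
qed

function sa_bipartite :: "nat \<Rightarrow> nat \<Rightarrow> int" where
  "sa_bipartite p q =
    (if p = 0 \<and> q = 0 then 1
     else if p = 0 \<or> q = 0 \<or> odd (p + q) then 0
     else - (\<Sum>(a, b) \<in> {..p} \<times> {..q} - {(p, q)}.
               of_nat (p choose a) * of_nat (q choose b) * sa_bipartite a b))"
  by pat_completeness auto
termination
  by (relation "Wellfounded.measure (\<lambda>(p, q). p + q)") (auto simp: le_less)

declare sa_bipartite.simps[simp del]

lemma sa_bipartite_0_0 [simp]: "sa_bipartite 0 0 = 1"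
  by (simp add: sa_bipartite.simps)

lemma sa_bipartite_eq_0:
  "(p = 0 \<or> q = 0 \<or> odd (p + q)) \<Longrightarrow> (p, q) \<noteq> (0, 0) \<Longrightarrow> sa_bipartite p q = 0"
  by (subst sa_bipartite.simps) auto

lemma sa_bipartite_odd: "odd (p + q) \<Longrightarrow> sa_bipartite p q = 0"
  by (rule sa_bipartite_eq_0) auto

lemma sum_binomial_sa_bipartite:
  assumes "even (p + q)"
  shows "(\<Sum>(a, b) \<in> {..p} \<times> {..q}. of_nat (p choose a) * of_nat (q choose b) * sa_bipartite a b) =
    (if p = 0 \<or> q = 0 then 1 else 0)"
proof (cases "p = 0 \<or> q = 0")
  case True
  then have "(\<Sum>(a, b) \<in> {..p} \<times> {..q} - {(0, 0)}.
      of_nat (p choose a) * of_nat (q choose b) * sa_bipartite a b) = 0"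
    by (intro sum.neutral ballI) (fastforce intro: sa_bipartite_eq_0)
  then show ?thesis
    using True by (subst sum.remove[of _ "(0, 0)"]) auto
next
  case False
  then show ?thesis
    using assms by (subst sum.remove[of _ "(p, q)"]) (auto simp: sa_bipartite.simps[of p q])
qed

lemma sum_Pow_card:
  fixes h :: "nat \<Rightarrow> 'b::comm_semiring_1"
  assumes "finite A"
  shows "(\<Sum>A' \<in> Pow A. h (card A')) = (\<Sum>a \<le> card A. of_nat (card A choose a) * h a)"
proof -
  have "(\<Sum>A' \<in> Pow A. h (card A')) = (\<Sum>a \<le> card A. \<Sum>A' \<in> {A' \<in> Pow A. card A' = a}. h (card A'))"
    using assms by (intro sum.group[symmetric]) (auto intro: card_mono)
  also have "\<dots> = (\<Sum>a \<le> card A. \<Sum>A' \<in> {A'. A' \<subseteq> A \<and> card A' = a}. h a)"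
    by (intro sum.cong) auto
  also have "\<dots> = (\<Sum>a \<le> card A. of_nat (card A choose a) * h a)"
    using n_subsets[OF assms] by simp
  finally show ?thesis .
qed

lemma sum_Pow_Times_card:
  fixes h :: "nat \<Rightarrow> nat \<Rightarrow> 'b::comm_semiring_1"
  assumes "finite A" "finite B"
  shows "(\<Sum>(A', B') \<in> Pow A \<times> Pow B. h (card A') (card B')) =
    (\<Sum>(a, b) \<in> {..card A} \<times> {..card B}. of_nat (card A choose a) * of_nat (card B choose b) * h a b)"
  using assms sum_Pow_card[OF assms(1), of "\<lambda>a. \<Sum>b \<le> card B. of_nat (card B choose b) * h a b"]
  by (simp add: sum.cartesian_product[symmetric] sum_Pow_card sum_distrib_left mult.assoc)

lemma sa_complete_bipartite:
  assumes "finite A" "finite B"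
  shows "sa (Inl ` A \<union> Inr ` B) Kpq_E = sa_bipartite (card A) (card B)"
  using assms
proof (induction "card A + card B" arbitrary: A B rule: less_induct)
  case less
  define V where "V = Inl ` A \<union> Inr ` B"
  have fin: "finite V" using less.prems by (simp add: V_def)
  have card_V: "card V = card A + card B"
    using less.prems by (simp add: V_def card_Inl_Un_Inr)
  consider "A = {}" "B = {}" | "A = {} \<longleftrightarrow> B \<noteq> {}" | "A \<noteq> {}" "B \<noteq> {}" by blast
  then show ?case
  proof cases
    case 1
    then show ?thesis by (simp add: sa_empty)
  next
    case 2
    then have "sa V Kpq_E = 0"
      using fin by (intro sa_edgeless) (auto simp: V_def adj_in_def Kpq_E_def)
    then show ?thesis
      using 2 less.prems by (simp add: V_def sa_bipartite_eq_0)
  next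
    case 3
    then have comps: "components V Kpq_E = {V}"
      by (simp add: V_def components_complete_bipartite)
    show ?thesis
    proof (cases "odd (card A + card B)")
      case True
      then show ?thesis
        using comps fin card_V by (simp add: V_def sa_odd_component sa_bipartite_odd)
    next
      case False
      have "(\<Sum>V' \<in> {V'. V' \<subset> V}. sa V' Kpq_E) =
          (\<Sum>(A', B') \<in> Pow A \<times> Pow B - {(A, B)}. sa_bipartite (card A') (card B'))"
        unfolding V_def sum_psubsets_Plus
      proof (rule sum.cong[OF refl])
        fix AB assume "AB \<in> Pow A \<times> Pow B - {(A, B)}"
        then obtain A' B' where AB: "AB = (A', B')" "A' \<subseteq> A" "B' \<subseteq> B" "(A', B') \<noteq> (A, B)"
          by auto
        then have "card A' + card B' < card A + card B"
          using less.prems by (intro card_add_card_less) auto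
        then show "(\<lambda>(A', B'). sa (Inl ` A' \<union> Inr ` B') Kpq_E) AB =
            (\<lambda>(A', B'). sa_bipartite (card A') (card B')) AB"
          using less.hyps[OF _ finite_subset[OF AB(2) less.prems(1)] finite_subset[OF AB(3) less.prems(2)]]
            AB(1) by simp
      qed
      also have "\<dots> = (\<Sum>(A', B') \<in> Pow A \<times> Pow B. sa_bipartite (card A') (card B'))
          - sa_bipartite (card A) (card B)"
        using less.prems by (simp add: sum_diff1)
      also have "(\<Sum>(A', B') \<in> Pow A \<times> Pow B. sa_bipartite (card A') (card B')) = 0"
        using 3 False less.prems
        by (simp add: sum_Pow_Times_card sum_binomial_sa_bipartite)
      finally show ?thesis
        using 3 False comps fin card_V by (simp add: V_def sa_rec)
    qed
  qed
qed

lemma sa_Kpq: "sa (Kpq_V p q) Kpq_E = sa_bipartite p q"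
  using sa_complete_bipartite[of "{..<p}" "{..<q}"] by (simp add: Kpq_V_def)

lemma binomial_mult_fact_le:
  assumes "k \<le> n"
  shows "real (n choose k) * fact k \<le> fact n"
proof -
  have "(n choose k) * fact k \<le> (n choose k) * fact k * fact (n - k)"
    by (simp add: fact_ge_1)
  also have "\<dots> = (fact n :: nat)"
    using binomial_fact_lemma[OF assms] by (simp add: mult_ac)
  finally show ?thesis
    by (metis of_nat_fact of_nat_le_iff of_nat_mult)
qed

lemma sum_power4_le: "(\<Sum>a \<le> n. (4::real) ^ a) \<le> 4 / 3 * 4 ^ n"
  by (induction n) auto

lemma sum_power4_Times_le: "(\<Sum>(a, b) \<in> {..p} \<times> {..q} - {(p, q)}. (4::real) ^ (a + b)) \<le> 4 ^ (p + q)"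
proof -
  have "(\<Sum>(a, b) \<in> {..p} \<times> {..q} - {(p, q)}. (4::real) ^ (a + b)) =
      (\<Sum>a \<le> p. 4 ^ a) * (\<Sum>b \<le> q. 4 ^ b) - 4 ^ (p + q)"
    by (simp add: sum_diff1 power_add sum_product sum.cartesian_product case_prod_unfold)
  also have "(\<Sum>a \<le> p. (4::real) ^ a) * (\<Sum>b \<le> q. 4 ^ b) \<le> (4 / 3 * 4 ^ p) * (4 / 3 * 4 ^ q)"
    by (intro mult_mono sum_power4_le) (auto intro: sum_nonneg)
  also have "(4 / 3 * 4 ^ p) * (4 / 3 * 4 ^ q) - 4 ^ (p + q) \<le> (4::real) ^ (p + q)"
    by (simp add: power_add)
  finally show ?thesis by simp
qed

lemma abs_sa_bipartite_le: "\<bar>real_of_int (sa_bipartite p q)\<bar> \<le> 4 ^ (p + q) * fact p * fact q"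
proof (induction "p + q" arbitrary: p q rule: less_induct)
  case less
  show ?case
  proof (cases "p = 0 \<or> q = 0 \<or> odd (p + q)")
    case True
    then have "\<bar>real_of_int (sa_bipartite p q)\<bar> \<le> 1"
      by (cases "(p, q) = (0, 0)") (auto simp: sa_bipartite_eq_0)
    also have "1 \<le> (4::real) ^ (p + q) * fact p * fact q"
      by (meson fact_ge_1 mult_ge1_I one_le_power one_le_numeral)
    finally show ?thesis .
  next
    case False
    let ?S = "{..p} \<times> {..q} - {(p, q)}"
    have term_le: "real (p choose a) * real (q choose b) * \<bar>real_of_int (sa_bipartite a b)\<bar>
        \<le> fact p * fact q * 4 ^ (a + b)" if "(a, b) \<in> ?S" for a b
    proof -
      have ab: "a \<le> p" "b \<le> q" "a + b < p + q" using that by auto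
      have "real (p choose a) * real (q choose b) * \<bar>real_of_int (sa_bipartite a b)\<bar>
          \<le> real (p choose a) * real (q choose b) * (4 ^ (a + b) * fact a * fact b)"
        using less.hyps[OF ab(3)] by (intro mult_left_mono) auto
      also have "\<dots> = (real (p choose a) * fact a) * (real (q choose b) * fact b) * 4 ^ (a + b)"
        by (simp add: algebra_simps)
      also have "\<dots> \<le> fact p * fact q * 4 ^ (a + b)"
        using binomial_mult_fact_le[OF ab(1)] binomial_mult_fact_le[OF ab(2)]
        by (intro mult_right_mono mult_mono) auto
      finally show ?thesis .
    qed
    have "\<bar>real_of_int (sa_bipartite p q)\<bar>
        = \<bar>\<Sum>(a, b) \<in> ?S. real (p choose a) * real (q choose b) * real_of_int (sa_bipartite a b)\<bar>"
      using False by (simp add: sa_bipartite.simps[of p q] case_prod_unfold)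
    also have "\<dots> \<le> (\<Sum>(a, b) \<in> ?S. real (p choose a) * real (q choose b) * \<bar>real_of_int (sa_bipartite a b)\<bar>)"
      by (rule order_trans[OF sum_abs]) (simp add: abs_mult case_prod_unfold)
    also have "\<dots> \<le> (\<Sum>(a, b) \<in> ?S. fact p * fact q * 4 ^ (a + b))"
      using term_le by (intro sum_mono) auto
    also have "\<dots> = fact p * fact q * (\<Sum>(a, b) \<in> ?S. 4 ^ (a + b))"
      by (simp add: sum_distrib_left case_prod_unfold)
    also have "\<dots> \<le> fact p * fact q * 4 ^ (p + q)"
      by (intro mult_left_mono sum_power4_Times_le) auto
    finally show ?thesis by (simp add: mult_ac)
  qed
qed

lemma abs_summable_on_Times_mult:
  fixes U :: "'a \<Rightarrow> 'c::{real_normed_div_algebra, banach}" and V :: "'b \<Rightarrow> 'c"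
  assumes "(\<lambda>a. norm (U a)) summable_on A" "(\<lambda>b. norm (V b)) summable_on B"
  shows "(\<lambda>(a, b). norm (U a * V b)) summable_on (A \<times> B)"
proof -
  have "(\<lambda>z. norm (case z of (a, b) \<Rightarrow> U a * V b)) summable_on (A \<times> B)"
  proof (rule iffD2[OF Infinite_Sum.abs_summable_on_Sigma_iff], intro conjI ballI)
    show "(\<lambda>b. norm (case (a, b) of (a, b) \<Rightarrow> U a * V b)) summable_on B" for a
      using summable_on_cmult_right[OF assms(2), of "norm (U a)"] by (simp add: norm_mult)
    have "(\<lambda>a. norm (U a) * (\<Sum>\<^sub>\<infinity>b\<in>B. norm (V b))) summable_on A"
      using summable_on_cmult_left[OF assms(1)] by simp
    then show "(\<lambda>a. norm (\<Sum>\<^sub>\<infinity>b\<in>B. norm (case (a, b) of (a, b) \<Rightarrow> U a * V b))) summable_on A"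
      by (simp add: norm_mult infsum_cmult_right' infsum_nonneg)
  qed
  then show ?thesis by (simp add: case_prod_unfold)
qed

lemma has_sum_Times_mult:
  fixes U :: "'a \<Rightarrow> 'c::{real_normed_div_algebra, banach}" and V :: "'b \<Rightarrow> 'c"
  assumes "(\<lambda>a. norm (U a)) summable_on A" "(\<lambda>b. norm (V b)) summable_on B"
    and "(U has_sum S) A" "(V has_sum T) B"
  shows "((\<lambda>(a, b). U a * V b) has_sum (S * T)) (A \<times> B)"
proof (rule has_sum_SigmaI)
  show "((\<lambda>b. case (a, b) of (a, b) \<Rightarrow> U a * V b) has_sum U a * T) B" for a
    using has_sum_cmult_right[OF assms(4)] by simp
  show "((\<lambda>a. U a * T) has_sum S * T) A"
    by (rule has_sum_cmult_left[OF assms(3)])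
  show "(\<lambda>(a, b). U a * V b) summable_on A \<times> B"
    using abs_summable_summable abs_summable_on_Times_mult[OF assms(1,2)]
    by (simp add: case_prod_unfold)
qed

lemma has_sum_convolution2:
  fixes P Q :: "nat \<times> nat \<Rightarrow> 'c::{real_normed_div_algebra, banach}"
  assumes "(\<lambda>z. norm (P z)) summable_on UNIV" "(\<lambda>z. norm (Q z)) summable_on UNIV"
    and "(P has_sum S) UNIV" "(Q has_sum T) UNIV"
  shows "((\<lambda>(p, q). \<Sum>(a, b) \<in> {..p} \<times> {..q}. P (p - a, q - b) * Q (a, b)) has_sum (S * T)) UNIV"
proof -
  let ?I = "Sigma (UNIV :: (nat \<times> nat) set) (\<lambda>(p, q). {..p} \<times> {..q})"
  have "((\<lambda>((p, q), (a, b)). P (p - a, q - b) * Q (a, b)) has_sum (S * T)) ?I \<longleftrightarrow>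
      ((\<lambda>(z, w). P z * Q w) has_sum (S * T)) (UNIV \<times> UNIV)"
    by (rule has_sum_reindex_bij_witness[where j = "\<lambda>((p, q), (a, b)). ((p - a, q - b), (a, b))"
          and i = "\<lambda>((k, l), (a, b)). ((k + a, l + b), (a, b))"]) auto
  then have "((\<lambda>((p, q), (a, b)). P (p - a, q - b) * Q (a, b)) has_sum (S * T)) ?I"
    using has_sum_Times_mult[OF assms] by simp
  then show ?thesis
    by (rule has_sum_SigmaD) (auto intro: has_sum_finiteI)
qed

definition egf2_term :: "(nat \<Rightarrow> nat \<Rightarrow> real) \<Rightarrow> real \<Rightarrow> real \<Rightarrow> nat \<times> nat \<Rightarrow> real" where
  "egf2_term c x y = (\<lambda>(p, q). c p q * (x ^ p / fact p) * (y ^ q / fact q))"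

definition binomial_convolution2 ::
  "(nat \<Rightarrow> nat \<Rightarrow> real) \<Rightarrow> (nat \<Rightarrow> nat \<Rightarrow> real) \<Rightarrow> nat \<Rightarrow> nat \<Rightarrow> real" where
  "binomial_convolution2 c d p q =
    (\<Sum>(a, b) \<in> {..p} \<times> {..q}. real (p choose a) * real (q choose b) * c (p - a) (q - b) * d a b)"

lemma power_div_fact_mult_binomial:
  fixes x :: "'a::field_char_0"
  assumes "a \<le> p"
  shows "x ^ (p - a) / fact (p - a) * (x ^ a / fact a) = of_nat (p choose a) * (x ^ p / fact p)"
proof -
  have "x ^ (p - a) * x ^ a = x ^ p"
    using assms by (simp add: power_add[symmetric])
  then show ?thesis
    using assms by (simp add: binomial_fact field_simps)
qed

lemma egf2_term_mult:
  assumes "a \<le> p" "b \<le> q"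
  shows "egf2_term c x y (p - a, q - b) * egf2_term d x y (a, b) =
    real (p choose a) * real (q choose b) * c (p - a) (q - b) * d a b * (x ^ p / fact p) * (y ^ q / fact q)"
proof -
  have "egf2_term c x y (p - a, q - b) * egf2_term d x y (a, b) = c (p - a) (q - b) * d a b *
      (x ^ (p - a) / fact (p - a) * (x ^ a / fact a)) * (y ^ (q - b) / fact (q - b) * (y ^ b / fact b))"
    by (simp add: egf2_term_def mult_ac)
  then show ?thesis
    unfolding power_div_fact_mult_binomial[OF assms(1)] power_div_fact_mult_binomial[OF assms(2)]
    by (simp only: mult_ac)
qed

lemma has_sum_egf2_term_mult:
  assumes "(\<lambda>z. norm (egf2_term c x y z)) summable_on UNIV" "(\<lambda>z. norm (egf2_term d x y z)) summable_on UNIV"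
    and "(egf2_term c x y has_sum S) UNIV" "(egf2_term d x y has_sum T) UNIV"
  shows "(egf2_term (binomial_convolution2 c d) x y has_sum (S * T)) UNIV"
proof -
  have "(\<Sum>(a, b) \<in> {..p} \<times> {..q}. egf2_term c x y (p - a, q - b) * egf2_term d x y (a, b))
      = egf2_term (binomial_convolution2 c d) x y (p, q)" for p q
  proof -
    have "(\<Sum>(a, b) \<in> {..p} \<times> {..q}. egf2_term c x y (p - a, q - b) * egf2_term d x y (a, b))
      = (\<Sum>(a, b) \<in> {..p} \<times> {..q}. real (p choose a) * real (q choose b) * c (p - a) (q - b) * d a b
          * (x ^ p / fact p) * (y ^ q / fact q))"
      by (intro sum.cong refl) (clarsimp simp: egf2_term_mult)
    also have "\<dots> = egf2_term (binomial_convolution2 c d) x y (p, q)"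
      by (simp add: egf2_term_def binomial_convolution2_def sum_distrib_right sum_divide_distrib case_prod_unfold)
    finally show ?thesis .
  qed
  then have "(\<lambda>(p, q). \<Sum>(a, b) \<in> {..p} \<times> {..q}. egf2_term c x y (p - a, q - b) * egf2_term d x y (a, b))
      = egf2_term (binomial_convolution2 c d) x y"
    by auto
  with has_sum_convolution2[OF assms] show ?thesis by simp
qed

lemma summable_norm_exp_series: "summable (\<lambda>n. norm ((x::real) ^ n / fact n))"
  using summable_exp[of "\<bar>x\<bar>"] by (simp add: abs_mult power_abs divide_inverse mult.commute)

lemma has_sum_exp_series: "((\<lambda>n. (x::real) ^ n / fact n) has_sum exp x) UNIV"
  using norm_summable_imp_has_sum[OF summable_norm_exp_series] exp_converges[of x]
  by (simp add: divide_inverse mult.commute)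

lemma abs_summable_on_exp_series: "(\<lambda>n. norm ((x::real) ^ n / fact n)) summable_on UNIV"
  using norm_summable_imp_summable_on[of "\<lambda>n. norm (x ^ n / fact n)"] summable_norm_exp_series
  by simp

lemma has_sum_cosh_series: "((\<lambda>n. if even n then (x::real) ^ n / fact n else 0) has_sum cosh x) UNIV"
proof (rule norm_summable_imp_has_sum)
  show "summable (\<lambda>n. norm (if even n then x ^ n / fact n else 0))"
    by (rule summable_comparison_test[OF _ summable_norm_exp_series]) auto
  show "(\<lambda>n. if even n then x ^ n / fact n else 0) sums cosh x"
  proof -
    have "(\<lambda>n. if even n then x ^ n /\<^sub>R fact n else 0) = (\<lambda>n. if even n then x ^ n / fact n else 0)"
      by (rule ext) (simp add: divide_inverse mult.commute)
    then show ?thesis using cosh_converges[of x] by simp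
  qed
qed

lemma has_sum_egf2_term_one: "(egf2_term (\<lambda>_ _. 1) x y has_sum (exp x * exp y)) UNIV"
  using has_sum_Times_mult[OF abs_summable_on_exp_series abs_summable_on_exp_series
      has_sum_exp_series has_sum_exp_series, of x y]
  by (simp add: egf2_term_def)

lemma abs_summable_on_egf2_term_one: "(\<lambda>z. norm (egf2_term (\<lambda>_ _. 1) x y z)) summable_on UNIV"
  using abs_summable_on_Times_mult[OF abs_summable_on_exp_series abs_summable_on_exp_series, of x y]
  by (simp add: egf2_term_def case_prod_unfold)

lemma egf2_term_even:
  "egf2_term (\<lambda>i j. if even (i + j) then 1 else 0) x y z =
    (egf2_term (\<lambda>_ _. 1) x y z + egf2_term (\<lambda>_ _. 1) (-x) (-y) z) / 2"
proof (cases z)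
  case (Pair i j)
  have "(-x) ^ i * (-y) ^ j = (-1) ^ (i + j) * (x ^ i * y ^ j)"
    by (simp add: power_minus[of x i] power_minus[of y j] power_add)
  then show ?thesis
    by (cases "even (i + j)") (auto simp: egf2_term_def Pair field_simps)
qed

lemma has_sum_egf2_term_even:
  "(egf2_term (\<lambda>i j. if even (i + j) then 1 else 0) x y has_sum cosh (x + y)) UNIV"
proof -
  have fun_eq: "egf2_term (\<lambda>i j. if even (i + j) then 1 else 0) x y =
      (\<lambda>z. (egf2_term (\<lambda>_ _. 1) x y z + egf2_term (\<lambda>_ _. 1) (-x) (-y) z) * (1 / 2))"
    by (rule ext) (subst egf2_term_even, simp)
  have cosh_eq: "cosh (x + y) = (exp x * exp y + exp (-x) * exp (-y)) * (1 / 2)"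
    by (simp add: cosh_def exp_add[symmetric])
  show ?thesis
    unfolding fun_eq cosh_eq by (intro has_sum_cmult_left has_sum_add has_sum_egf2_term_one)
qed

lemma abs_summable_on_egf2_term_even:
  "(\<lambda>z. norm (egf2_term (\<lambda>i j. if even (i + j) then 1 else 0) x y z)) summable_on UNIV"
  by (rule Infinite_Sum.abs_summable_on_comparison_test[OF abs_summable_on_egf2_term_one])
    (auto simp: egf2_term_def)

lemma has_sum_on_first_axis:
  assumes "(f has_sum s) UNIV"
  shows "((\<lambda>(p, q :: nat). if q = 0 then f p else 0) has_sum s) UNIV"
proof -
  have "((\<lambda>(p, q :: nat). if q = 0 then f p else 0) has_sum s) (range (\<lambda>p. (p, 0)))"
    using assms by (subst has_sum_reindex) (auto simp: inj_on_def o_def)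
  then show ?thesis
    by (subst has_sum_cong_neutral[where T = "range (\<lambda>p. (p, 0))"]) (auto simp: image_iff)
qed

lemma has_sum_on_second_axis:
  assumes "(f has_sum s) UNIV"
  shows "((\<lambda>(p :: nat, q). if p = 0 then f q else 0) has_sum s) UNIV"
  using has_sum_swap[where f = "\<lambda>(p, q :: nat). if q = 0 then f p else 0" and A = UNIV and B = UNIV]
    has_sum_on_first_axis[OF assms]
  by simp

lemma has_sum_egf2_term_axes:
  "(egf2_term (\<lambda>p q. if even (p + q) \<and> (p = 0 \<or> q = 0) then 1 else 0) x y
    has_sum (cosh x + cosh y - 1)) UNIV"
proof -
  let ?cx = "\<lambda>n. if even n then x ^ n / fact n else 0"
  let ?cy = "\<lambda>n. if even n then y ^ n / fact n else 0"
  have "((\<lambda>z. (case z of (p, q) \<Rightarrow> if q = 0 then ?cx p else 0) + (case z of (p, q) \<Rightarrow> if p = 0 then ?cy q else 0)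
      + - (if z = (0, 0) then 1 else 0)) has_sum (cosh x + cosh y + - 1)) UNIV"
    by (intro has_sum_uminusI has_sum_add has_sum_on_first_axis has_sum_on_second_axis has_sum_cosh_series
        has_sum_finite_neutralI[where B = "{(0, 0)}"]) auto
  moreover have "(\<lambda>z. (case z of (p, q) \<Rightarrow> if q = 0 then ?cx p else 0) + (case z of (p, q) \<Rightarrow> if p = 0 then ?cy q else 0)
      + - (if z = (0, 0) then 1 else 0)) = egf2_term (\<lambda>p q. if even (p + q) \<and> (p = 0 \<or> q = 0) then 1 else 0) x y"
    by (auto simp: egf2_term_def fun_eq_iff)
  ultimately show ?thesis by simp
qed

lemma binomial_convolution2_even_sa_bipartite:
  "binomial_convolution2 (\<lambda>i j. if even (i + j) then 1 else 0) (\<lambda>a b. real_of_int (sa_bipartite a b)) =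
    (\<lambda>p q. if even (p + q) \<and> (p = 0 \<or> q = 0) then 1 else 0)"
proof (intro ext)
  fix p q :: nat
  define s where "s = (\<Sum>(a, b) \<in> {..p} \<times> {..q}. of_nat (p choose a) * of_nat (q choose b) * sa_bipartite a b)"
  \<comment> \<open>sa_bipartite a b vanishes unless a + b is even, and then p - a + (q - b) has the parity of p + q\<close>
  have parity: "real (p choose a) * real (q choose b) * (if even (p - a + (q - b)) then 1 else 0) *
      real_of_int (sa_bipartite a b) =
      (if even (p + q) then 1 else 0) * real_of_int (of_nat (p choose a) * of_nat (q choose b) * sa_bipartite a b)"
    if "a \<le> p" "b \<le> q" for a b
  proof (cases "even (a + b)")
    case True
    then have "even (p - a + (q - b)) \<longleftrightarrow> even (p + q)" using that by presburger
    then show ?thesis by simp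
  qed (simp add: sa_bipartite_odd)
  have "binomial_convolution2 (\<lambda>i j. if even (i + j) then 1 else 0) (\<lambda>a b. real_of_int (sa_bipartite a b)) p q
      = (if even (p + q) then 1 else 0) * real_of_int s"
    unfolding binomial_convolution2_def s_def of_int_sum sum_distrib_left
  proof (rule sum.cong[OF refl])
    fix z assume "z \<in> {..p} \<times> {..q}"
    then obtain a b where z: "z = (a, b)" and ab: "a \<le> p" "b \<le> q" by auto
    show "(\<lambda>(a, b). real (p choose a) * real (q choose b) * (if even (p - a + (q - b)) then 1 else 0) *
        real_of_int (sa_bipartite a b)) z =
      (if even (p + q) then 1 else 0) * real_of_int ((\<lambda>(a, b). of_nat (p choose a) * of_nat (q choose b) *
        sa_bipartite a b) z)"
      unfolding z prod.case by (rule parity[OF ab])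
  qed
  moreover have "even (p + q) \<Longrightarrow> s = (if p = 0 \<or> q = 0 then 1 else 0)"
    unfolding s_def by (rule sum_binomial_sa_bipartite)
  ultimately show "binomial_convolution2 (\<lambda>i j. if even (i + j) then 1 else 0)
      (\<lambda>a b. real_of_int (sa_bipartite a b)) p q = (if even (p + q) \<and> (p = 0 \<or> q = 0) then 1 else 0)"
    by auto
qed

lemma abs_summable_on_geometric: "\<bar>c\<bar> < 1 \<Longrightarrow> (\<lambda>n. norm ((c::real) ^ n)) summable_on UNIV"
  using norm_summable_imp_summable_on[of "\<lambda>n. norm (c ^ n)"] summable_geometric[of "\<bar>c\<bar>"]
  by (simp add: power_abs)

lemma abs_summable_on_egf2_term_sa_bipartite:
  assumes "\<bar>x\<bar> < 1 / 4" "\<bar>y\<bar> < 1 / 4"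
  shows "(\<lambda>z. norm (egf2_term (\<lambda>p q. real_of_int (sa_bipartite p q)) x y z)) summable_on UNIV"
proof (rule Infinite_Sum.abs_summable_on_comparison_test)
  show "(\<lambda>z. norm (case z of (p, q) \<Rightarrow> (4 * \<bar>x\<bar>) ^ p * (4 * \<bar>y\<bar>) ^ q)) summable_on UNIV"
    using abs_summable_on_Times_mult[OF abs_summable_on_geometric abs_summable_on_geometric, of "4 * \<bar>x\<bar>" "4 * \<bar>y\<bar>"]
      assms by (simp add: case_prod_unfold)
  fix z :: "nat \<times> nat"
  obtain p q where z: "z = (p, q)" by fastforce
  have "norm (egf2_term (\<lambda>p q. real_of_int (sa_bipartite p q)) x y z)
      = \<bar>real_of_int (sa_bipartite p q)\<bar> * (\<bar>x\<bar> ^ p * \<bar>y\<bar> ^ q) / (fact p * fact q)"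
    by (simp add: egf2_term_def z abs_mult power_abs)
  also have "\<dots> \<le> (4 ^ (p + q) * fact p * fact q) * (\<bar>x\<bar> ^ p * \<bar>y\<bar> ^ q) / (fact p * fact q)"
    by (intro divide_right_mono mult_right_mono abs_sa_bipartite_le) auto
  also have "\<dots> = norm (case z of (p, q) \<Rightarrow> (4 * \<bar>x\<bar>) ^ p * (4 * \<bar>y\<bar>) ^ q)"
    by (simp add: z power_add power_mult_distrib abs_mult)
  finally show "norm (egf2_term (\<lambda>p q. real_of_int (sa_bipartite p q)) x y z)
      \<le> norm (case z of (p, q) \<Rightarrow> (4 * \<bar>x\<bar>) ^ p * (4 * \<bar>y\<bar>) ^ q)" .
qed

theorem mainTheorem6:
  shows "\<exists>r>0. \<forall>x y :: real. \<bar>x\<bar> < r \<and> \<bar>y\<bar> < r \<longrightarrow>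
    ((\<lambda>(p, q). real_of_int (sa (Kpq_V p q) Kpq_E) * (x ^ p / fact p) * (y ^ q / fact q))
      has_sum ((cosh x + cosh y - 1) / cosh (x + y))) UNIV"
proof (intro exI[of _ "1 / 4"] conjI allI impI)
  fix x y :: real
  assume "\<bar>x\<bar> < 1 / 4 \<and> \<bar>y\<bar> < 1 / 4"
  then have abs_summable: "(\<lambda>z. norm (egf2_term (\<lambda>p q. real_of_int (sa_bipartite p q)) x y z)) summable_on UNIV"
    by (intro abs_summable_on_egf2_term_sa_bipartite) auto
  then obtain S where S: "(egf2_term (\<lambda>p q. real_of_int (sa_bipartite p q)) x y has_sum S) UNIV"
    using abs_summable_summable summable_on_def by blast
  have "(egf2_term (\<lambda>p q. if even (p + q) \<and> (p = 0 \<or> q = 0) then 1 else 0) x y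
      has_sum (cosh (x + y) * S)) UNIV"
    using has_sum_egf2_term_mult[OF abs_summable_on_egf2_term_even abs_summable has_sum_egf2_term_even S]
    by (simp only: binomial_convolution2_even_sa_bipartite)
  then have "cosh (x + y) * S = cosh x + cosh y - 1"
    using has_sum_egf2_term_axes has_sum_unique by blast
  then have "S = (cosh x + cosh y - 1) / cosh (x + y)"
    using cosh_real_pos[of "x + y"] by (simp add: field_simps)
  then show "((\<lambda>(p, q). real_of_int (sa (Kpq_V p q) Kpq_E) * (x ^ p / fact p) * (y ^ q / fact q))
      has_sum ((cosh x + cosh y - 1) / cosh (x + y))) UNIV"
    using S by (simp add: egf2_term_def sa_Kpq)
qed simp

end
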